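(* If $6$ divides $n$, then $IK_n$ is not a $G$-graph.
   Context: $K_n$ is the complete simple graph on $n$ vertices and $IK_n$ its incidence graph (the simple graph whose vertices are the vertices and edges of $K_n$, each edge adjacent exactly to its two end-points). For a group $G$ and a multiset $S$ of elements of $G$, $\Phi(G,S)$ is the multigraph whose vertex set is the union over the members $s$ of $S$ (with multiplicity) of the right cosets $\langle s\rangle x$, $x\in G$, with one edge labeled $g$ between $\langle s\rangle x$ and $\langle t\rangle y$ ($s,t$ distinct members of $S$) for each $g\in\langle s\rangle x\cap\langle t\rangle y$, and no other edges; a $G$-graph is a multigraph isomorphic (ignoring labels) to some $\Phi(G,S)$. *)

theory Defs
  imports "HOL-Algebra.Algebra" "HOL-Library.Equipollence"
begin

text \<open>Multigraphs are represented by a vertex set V and, for every pair of vertices,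
  the set of (labels of) edges joining them.\<close>

definition multigraph_iso ::
  "'a set \<Rightarrow> ('a \<Rightarrow> 'a \<Rightarrow> 'e set) \<Rightarrow> 'b set \<Rightarrow> ('b \<Rightarrow> 'b \<Rightarrow> 'f set) \<Rightarrow> bool" where
  "multigraph_iso V1 E1 V2 E2 \<longleftrightarrow>
     (\<exists>f. bij_betw f V1 V2 \<and> (\<forall>u\<in>V1. \<forall>v\<in>V1. E1 u v \<approx> E2 (f u) (f v)))"

text \<open>The multiset S is given as a list of group elements
  (a list determines the multiset, its entries with multiplicity are indexed by
  positions i < length S). A vertex is a pair (i, C) with C a right coset of the
  cyclic subgroup generated by S!i; distinct members of S give disjoint vertex
  classes.\<close>

definition phi_vertices :: "('g, 'm) monoid_scheme \<Rightarrow> 'g list \<Rightarrow> (nat \<times> 'g set) set" where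
  "phi_vertices G S =
     {(i, C). i < length S \<and> C \<in> rcosets\<^bsub>G\<^esub> (generate G {S ! i})}"

definition phi_edges :: "nat \<times> 'g set \<Rightarrow> nat \<times> 'g set \<Rightarrow> 'g set" where
  "phi_edges x y = (if fst x \<noteq> fst y then snd x \<inter> snd y else {})"

definition is_G_graph :: "'a set \<Rightarrow> ('a \<Rightarrow> 'a \<Rightarrow> 'e set) \<Rightarrow> ('g, 'm) monoid_scheme \<Rightarrow> bool" where
  "is_G_graph V E G \<longleftrightarrow>
     (\<exists>S. set S \<subseteq> carrier G \<and> multigraph_iso V E (phi_vertices G S) phi_edges)"

text \<open>The incidence graph IK_n of K_n on vertex set {0..<n}: vertices Inl v (vertices of K_n)
  and Inr e (edges of K_n, i.e. 2-subsets); an edge e is adjacent exactly to its end-points.\<close>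

definition IK_vertices :: "nat \<Rightarrow> (nat + nat set) set" where
  "IK_vertices n = Inl ` {..<n} \<union> Inr ` {e. e \<subseteq> {..<n} \<and> card e = 2}"

definition IK_adj :: "nat + nat set \<Rightarrow> nat + nat set \<Rightarrow> bool" where
  "IK_adj x y = (case (x, y) of
       (Inl v, Inr e) \<Rightarrow> v \<in> e
     | (Inr e, Inl v) \<Rightarrow> v \<in> e
     | _ \<Rightarrow> False)"

definition IK_edges :: "nat + nat set \<Rightarrow> nat + nat set \<Rightarrow> (nat + nat set) set set" where
  "IK_edges x y = (if IK_adj x y then {{x, y}} else {})"

end

theory Submission
  imports Defs "HOL-Algebra.Sylow"
begin

text \<open>Suppose \<open>IK\<^sub>n \<cong> \<Phi>(G, S)\<close>. As \<open>IK\<^sub>n\<close> has edges but no triangles, \<open>S\<close> has exactly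
  two members, and since its edges are simple, a vertex of \<open>\<Phi>(G, S)\<close> that is a coset of
  \<open>\<langle>s\<rangle>\<close> has degree \<open>|\<langle>s\<rangle>|\<close>. Comparing with the degrees \<open>n - 1\<close> of the points and \<open>2\<close> of
  the edges of \<open>K\<^sub>n\<close>, one member of \<open>S\<close> generates a subgroup \<open>H\<close> of order \<open>n - 1\<close> whose \<open>n\<close>
  cosets are the points, and the other an involution \<open>b\<close> whose cosets \<open>{z, b z}\<close> are the
  edges. The edge \<open>{z, b z}\<close> joins the points \<open>H z\<close> and \<open>H b z\<close>, so \<open>z \<mapsto> (H z, H b z)\<close> is a
  bijection from \<open>G\<close> onto the ordered pairs of distinct points: \<open>G\<close> acts sharply
  2-transitively on the cosets of \<open>H\<close>.

  The point stabilizers are then \<open>n\<close> conjugates of \<open>H\<close> meeting pairwise trivially, which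
  leaves exactly \<open>n - 1\<close> elements fixing no point. For even \<open>n\<close> the order \<open>n - 1\<close> of \<open>H\<close> is
  odd, so the \<open>n - 1\<close> involutions found in the cosets other than \<open>H\<close> fix no point and are all
  of them. If also \<open>3\<close> divides \<open>n\<close>, an element of order \<open>3\<close> fixes no point either, as
  \<open>3\<close> does not divide \<open>n - 1\<close>, and would have to be an involution.\<close>


lemma (in group) card_subgroup_dvd:
  assumes "subgroup I G" "subgroup J G" "I \<subseteq> J"
  shows "card I dvd card J"
proof -
  interpret J: group "G\<lparr>carrier := J\<rparr>" using assms(2) subgroup_imp_group by blast
  have "subgroup I (G\<lparr>carrier := J\<rparr>)" using assms subgroup_incl by blast
  then have "card (rcosets\<^bsub>G\<lparr>carrier := J\<rparr>\<^esub> I) * card I = card J"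
    using J.lagrange by (simp add: order_def)
  then show ?thesis by (metis dvd_triv_right)
qed

lemma (in group) subgroups_coprime_card_Int:
  assumes "finite (carrier G)" "subgroup K G" "subgroup L G" "coprime (card K) (card L)"
  shows "K \<inter> L = {\<one>}"
proof -
  have KL: "subgroup (K \<inter> L) G" using assms(2,3) subgroups_Inter_pair by blast
  have "card (K \<inter> L) dvd card K" "card (K \<inter> L) dvd card L"
    using card_subgroup_dvd[OF KL] assms(2,3) by auto
  then have "card (K \<inter> L) = 1" using assms(4) coprime_common_divisor_nat by blast
  moreover have "\<one> \<in> K \<inter> L" using KL subgroup.one_closed by blast
  ultimately show ?thesis by (metis card_1_singletonE singletonD)
qed

lemma (in group) involution_subgroup:
  assumes "t \<in> carrier G" "t \<otimes> t = \<one>"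
  shows "subgroup {\<one>, t} G"
proof (rule subgroupI)
  have "inv t = t" using assms inv_equality by blast
  then show "\<And>a. a \<in> {\<one>, t} \<Longrightarrow> inv a \<in> {\<one>, t}" by auto
qed (use assms in auto)

lemma (in group) subgroup_card_2:
  assumes "subgroup K G" "card K = 2"
  obtains b where "K = {\<one>, b}" "b \<noteq> \<one>" "b \<in> carrier G" "b \<otimes> b = \<one>"
proof -
  interpret K: subgroup K G by fact
  obtain b where Kb: "K = {\<one>, b}" "b \<noteq> \<one>"
    using assms(2) K.one_closed by (metis card_2_iff doubleton_eq_iff insertE singletonD)
  then have b: "b \<in> carrier G" using K.subset by blast
  have "b \<otimes> b \<in> K" using K.m_closed Kb(1) by blast
  moreover have "b \<otimes> b \<noteq> b" using Kb(2) b by (metis r_cancel_one')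
  ultimately have "b \<otimes> b = \<one>" using Kb(1) by blast
  with Kb b show ?thesis using that by blast
qed

lemma (in group) m_inv_cancel_left:
  "x \<in> carrier G \<Longrightarrow> y \<in> carrier G \<Longrightarrow> x \<otimes> (inv x \<otimes> y) = y"
  by (simp flip: m_assoc)

lemma (in group) inv_m_cancel_left:
  "x \<in> carrier G \<Longrightarrow> y \<in> carrier G \<Longrightarrow> inv x \<otimes> (x \<otimes> y) = y"
  by (simp flip: m_assoc)

lemma (in group) rcos_eq_iff:
  assumes "subgroup H G" "x \<in> carrier G" "y \<in> carrier G"
  shows "H #> x = H #> y \<longleftrightarrow> x \<otimes> inv y \<in> H"
  using assms repr_independence[of x H y] repr_independenceD[of H x y]
    subgroup.rcos_module[OF assms(1) is_group assms(3,2)]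
  by blast

lemma (in group) rcosets_eq_rcos_of_mem:
  assumes "subgroup H G" "P \<in> rcosets H" "x \<in> P"
  shows "P = H #> x"
  using assms repr_independence by (auto simp: RCOSETS_def)

section \<open>Sharply 2-transitive actions on cosets\<close>

text \<open>Bijectivity of \<open>z \<mapsto> (H z, H b z)\<close> says that \<open>G\<close> acts regularly, by right
  multiplication, on ordered pairs of distinct right cosets of \<open>H\<close>: the action on the
  cosets is sharply 2-transitive.\<close>

locale sharply_2_transitive_cosets = group G for G (structure) +
  fixes H b
  assumes H_subgroup: "subgroup H G"
    and finite_carrier: "finite (carrier G)"
    and b_carrier: "b \<in> carrier G"
    and b_involution: "b \<otimes> b = \<one>"
    and pair_bij: "bij_betw (\<lambda>z. (H #> z, H #> (b \<otimes> z))) (carrier G)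
                     {(P, Q). P \<in> rcosets H \<and> Q \<in> rcosets H \<and> P \<noteq> Q}"
begin

definition stab :: "'a set \<Rightarrow> 'a set" where
  "stab P = {x \<in> carrier G. P #> x = P}"

lemma H_carrier: "H \<subseteq> carrier G"
  using H_subgroup subgroup.subset by blast

lemma rcoset_subset_carrier: "P \<in> rcosets H \<Longrightarrow> P \<subseteq> carrier G"
  using subgroup.rcosets_carrier[OF H_subgroup is_group] .

lemma H_in_rcosets: "H \<in> rcosets H"
  using subgroup.subgroup_in_rcosets[OF H_subgroup is_group] .

lemma finite_rcosets: "finite (rcosets H)"
  using rcosets_subset_PowG[OF H_subgroup] finite_carrier by (meson finite_Pow_iff finite_subset)

lemma card_carrier: "card (carrier G) = card (rcosets H) * (card (rcosets H) - 1)"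
proof -
  let ?R = "rcosets H"
  have "{(P, Q). P \<in> ?R \<and> Q \<in> ?R \<and> P \<noteq> Q} = ?R \<times> ?R - (\<lambda>P. (P, P)) ` ?R" by auto
  moreover have "card (?R \<times> ?R - (\<lambda>P. (P, P)) ` ?R) = card ?R * card ?R - card ?R"
    using finite_rcosets by (subst card_Diff_subset) (auto simp: card_image inj_on_def card_cartesian_product)
  ultimately show ?thesis
    using bij_betw_same_card[OF pair_bij] by (simp add: diff_mult_distrib2)
qed

lemma two_le_card_rcosets: "2 \<le> card (rcosets H)"
proof -
  have "card (carrier G) \<noteq> 0" using finite_carrier by auto
  then show ?thesis using card_carrier by (cases "card (rcosets H)") auto
qed

lemma card_H: "card H = card (rcosets H) - 1"
  using lagrange[OF H_subgroup] card_carrier two_le_card_rcosets by (simp add: order_def)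

lemma pair_surj:
  assumes "P \<in> rcosets H" "Q \<in> rcosets H" "P \<noteq> Q"
  obtains z where "z \<in> carrier G" "H #> z = P" "H #> (b \<otimes> z) = Q"
proof -
  have "(P, Q) \<in> (\<lambda>z. (H #> z, H #> (b \<otimes> z))) ` carrier G"
    using assms bij_betw_imp_surj_on[OF pair_bij] by simp
  then show ?thesis using that by blast
qed

lemma pair_inj:
  assumes "z \<in> carrier G" "w \<in> carrier G" "H #> z = H #> w" "H #> (b \<otimes> z) = H #> (b \<otimes> w)"
  shows "z = w"
  using assms inj_onD[OF bij_betw_imp_inj_on[OF pair_bij]] by simp

lemma stab_subgroup:
  assumes "P \<in> rcosets H"
  shows "subgroup (stab P) G"
proof (rule subgroupI)
  have P: "P \<subseteq> carrier G" using rcoset_subset_carrier assms .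
  show "stab P \<subseteq> carrier G" "stab P \<noteq> {}" using P by (auto simp: stab_def intro!: exI[of _ \<one>])
  show "inv x \<in> stab P" if "x \<in> stab P" for x
  proof -
    have x: "x \<in> carrier G" "P #> x = P" using that by (auto simp: stab_def)
    then have "P #> inv x = P #> (x \<otimes> inv x)" using P coset_mult_assoc by (metis inv_closed)
    then show ?thesis using x P by (simp add: stab_def)
  qed
  show "x \<otimes> y \<in> stab P" if "x \<in> stab P" "y \<in> stab P" for x y
    using that P by (auto simp: stab_def simp flip: coset_mult_assoc)
qed

lemma stab_rcos:
  assumes "y \<in> carrier G"
  shows "stab (H #> y) = (\<lambda>h. inv y \<otimes> h \<otimes> y) ` H"
proof (rule Set.set_eqI, rule iffI)
  fix x assume "x \<in> stab (H #> y)"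
  then have x: "x \<in> carrier G" "H #> (y \<otimes> x) = H #> y"
    using assms H_carrier by (auto simp: stab_def coset_mult_assoc)
  then have "y \<otimes> x \<otimes> inv y \<in> H" using rcos_eq_iff[OF H_subgroup] assms by simp
  moreover have "x = inv y \<otimes> (y \<otimes> x \<otimes> inv y) \<otimes> y"
    using x assms by (simp add: m_assoc inv_m_cancel_left)
  ultimately show "x \<in> (\<lambda>h. inv y \<otimes> h \<otimes> y) ` H" by blast
next
  fix x assume "x \<in> (\<lambda>h. inv y \<otimes> h \<otimes> y) ` H"
  then obtain h where h: "h \<in> H" "x = inv y \<otimes> h \<otimes> y" by blast
  then have hc: "h \<in> carrier G" using H_carrier by blast
  have "y \<otimes> x = h \<otimes> y" using h hc assms by (simp add: m_assoc m_inv_cancel_left)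
  then have "H #> (y \<otimes> x) = H #> y"
    using h hc assms H_carrier by (simp add: coset_join2[OF hc H_subgroup] flip: coset_mult_assoc)
  then show "x \<in> stab (H #> y)" using h hc assms H_carrier by (simp add: stab_def coset_mult_assoc)
qed

lemma card_stab:
  assumes "P \<in> rcosets H"
  shows "card (stab P) = card H"
proof -
  obtain y where y: "y \<in> carrier G" "P = H #> y" using assms by (auto simp: RCOSETS_def)
  have "inj_on (\<lambda>h. inv y \<otimes> h \<otimes> y) H"
  proof (rule inj_onI)
    fix h h' assume "h \<in> H" "h' \<in> H" "inv y \<otimes> h \<otimes> y = inv y \<otimes> h' \<otimes> y"
    then show "h = h'" using y(1) H_carrier by (simp add: subset_iff)
  qed
  then show ?thesis using stab_rcos[OF y(1)] y(2) by (simp add: card_image)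
qed

lemma one_in_stab: "P \<in> rcosets H \<Longrightarrow> \<one> \<in> stab P"
  using rcoset_subset_carrier by (simp add: stab_def)

lemma stab_Int_stab:
  assumes "P \<in> rcosets H" "Q \<in> rcosets H" "P \<noteq> Q"
  shows "stab P \<inter> stab Q = {\<one>}"
proof
  show "{\<one>} \<subseteq> stab P \<inter> stab Q" using assms one_in_stab by blast
  show "stab P \<inter> stab Q \<subseteq> {\<one>}"
  proof
    fix x assume x: "x \<in> stab P \<inter> stab Q"
    then have xc: "x \<in> carrier G" by (simp add: stab_def)
    obtain z where z: "z \<in> carrier G" "H #> z = P" "H #> (b \<otimes> z) = Q"
      using pair_surj assms .
    have "H #> (z \<otimes> x) = P #> x"
      using coset_mult_assoc[OF H_carrier z(1) xc] z(2) by simp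
    moreover have "H #> (b \<otimes> (z \<otimes> x)) = Q #> x"
      using coset_mult_assoc[OF H_carrier _ xc, of "b \<otimes> z"] z b_carrier xc by (simp add: m_assoc)
    ultimately have zx: "H #> (z \<otimes> x) = H #> z" "H #> (b \<otimes> (z \<otimes> x)) = H #> (b \<otimes> z)"
      using x z by (simp_all add: stab_def)
    have "z \<otimes> x = z" using pair_inj[OF _ z(1) zx] z(1) xc by blast
    then show "x \<in> {\<one>}" using z(1) xc by simp
  qed
qed

text \<open>The witness is \<open>z\<inverse> b z\<close> for the \<open>z\<close> with \<open>H z = H\<close> and \<open>H b z = Q\<close>.\<close>

lemma rcoset_contains_involution:
  assumes "Q \<in> rcosets H" "Q \<noteq> H"
  obtains t where "t \<in> Q" "t \<otimes> t = \<one>"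
proof -
  obtain z where z: "z \<in> carrier G" "H #> z = H" "H #> (b \<otimes> z) = Q"
    using pair_surj[OF H_in_rcosets assms(1)] assms(2) by blast
  have bz: "b \<otimes> z \<in> carrier G" using z(1) b_carrier by simp
  have "inv z \<in> H" using subgroup.m_inv_closed[OF H_subgroup coset_join1[OF z(2,1) H_subgroup]] .
  then have "inv z \<otimes> (b \<otimes> z) \<in> H #> (b \<otimes> z)" using rcosI[OF _ H_carrier bz] by blast
  moreover have "b \<otimes> (b \<otimes> z) = b \<otimes> b \<otimes> z" using z(1) b_carrier by (simp add: m_assoc)
  then have "b \<otimes> (b \<otimes> z) = z" using z(1) b_involution by simp
  then have "inv z \<otimes> (b \<otimes> z) \<otimes> (inv z \<otimes> (b \<otimes> z)) = \<one>"
    using z(1) b_carrier by (simp add: m_assoc m_inv_cancel_left)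
  ultimately show ?thesis using that z(3) by blast
qed

definition derangements :: "'a set" where
  "derangements = carrier G - (\<Union>P\<in>rcosets H. stab P)"

lemma card_derangements: "card derangements = card (rcosets H) - 1"
proof -
  define n where "n = card (rcosets H)"
  define U where "U = (\<Union>P\<in>rcosets H. stab P)"
  have U_carrier: "U \<subseteq> carrier G" by (auto simp: U_def stab_def)
  then have finite_U: "finite U" using finite_carrier finite_subset by blast
  have "card (\<Union>P\<in>rcosets H. stab P - {\<one>}) = (\<Sum>P\<in>rcosets H. card (stab P - {\<one>}))"
  proof (rule card_UN_disjoint[OF finite_rcosets])
    show "\<forall>P\<in>rcosets H. finite (stab P - {\<one>})"
      using finite_U by (auto simp: U_def intro: finite_subset)
    show "\<forall>P\<in>rcosets H. \<forall>Q\<in>rcosets H. P \<noteq> Q \<longrightarrow> (stab P - {\<one>}) \<inter> (stab Q - {\<one>}) = {}"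
      using stab_Int_stab by blast
  qed
  also have "\<dots> = n * (n - 2)"
    using card_stab card_H one_in_stab by (simp add: n_def card_Diff_singleton numeral_2_eq_2)
  finally have "card (\<Union>P\<in>rcosets H. stab P - {\<one>}) = n * (n - 2)" .
  moreover have "(\<Union>P\<in>rcosets H. stab P - {\<one>}) = U - {\<one>}" by (auto simp: U_def)
  moreover have "\<one> \<in> U" using H_in_rcosets one_in_stab by (auto simp: U_def)
  ultimately have "card U = n * (n - 2) + 1" using card.remove[OF finite_U] by simp
  then have "card derangements = n * (n - 1) - (n * (n - 2) + 1)"
    using card_carrier card_Diff_subset[OF finite_U U_carrier] by (simp add: derangements_def U_def n_def)
  also have "\<dots> = n - 1"
  proof -
    obtain m where "n = m + 2" using two_le_card_rcosets by (metis add.commute le_Suc_ex n_def)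
    then show ?thesis by (simp add: algebra_simps)
  qed
  finally show ?thesis by (simp add: n_def)
qed

lemma derangement_if_coprime:
  assumes "subgroup K G" "coprime (card K) (card H)" "x \<in> K" "x \<noteq> \<one>"
  shows "x \<in> derangements"
proof -
  have "K \<inter> stab P = {\<one>}" if "P \<in> rcosets H" for P
    using subgroups_coprime_card_Int[OF finite_carrier assms(1) stab_subgroup[OF that]]
      assms(2) card_stab[OF that] by simp
  then show ?thesis
    using assms subgroup.subset by (fastforce simp: derangements_def)
qed

lemma derangement_involution:
  assumes "even (card (rcosets H))" "x \<in> derangements"
  shows "x \<otimes> x = \<one>"
proof -
  have "\<forall>Q\<in>rcosets H - {H}. \<exists>t. t \<in> Q \<and> t \<otimes> t = \<one>"
  proof
    fix Q assume "Q \<in> rcosets H - {H}"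
    then obtain t where "t \<in> Q" "t \<otimes> t = \<one>" using rcoset_contains_involution by blast
    then show "\<exists>t. t \<in> Q \<and> t \<otimes> t = \<one>" by blast
  qed
  from bchoice[OF this] obtain t where t: "\<forall>Q\<in>rcosets H - {H}. t Q \<in> Q \<and> t Q \<otimes> t Q = \<one>"
    by blast
  have rcosets_disjoint: "P = Q" if "P \<in> rcosets H" "Q \<in> rcosets H" "y \<in> P" "y \<in> Q" for P Q y
    using rcos_disjoint[OF H_subgroup] that by (auto simp: pairwise_def disjnt_def)
  have inj: "inj_on t (rcosets H - {H})"
  proof (rule inj_onI)
    fix P Q assume "P \<in> rcosets H - {H}" "Q \<in> rcosets H - {H}" "t P = t Q"
    moreover from this have "t P \<in> P" "t Q \<in> Q" using t by blast+
    ultimately show "P = Q" using rcosets_disjoint[of P Q "t P"] by simp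
  qed
  have "odd (card H)" using assms(1) two_le_card_rcosets card_H by presburger
  then have coprime: "coprime 2 (card H)" by simp
  have "t ` (rcosets H - {H}) \<subseteq> derangements"
  proof
    fix y assume "y \<in> t ` (rcosets H - {H})"
    then obtain Q where Q: "Q \<in> rcosets H - {H}" "y = t Q" by blast
    then have y: "y \<in> Q" "y \<otimes> y = \<one>" using t by auto
    have yc: "y \<in> carrier G" using Q y rcoset_subset_carrier by blast
    have "y \<noteq> \<one>"
      using rcosets_disjoint[OF H_in_rcosets, of Q \<one>] Q y H_subgroup subgroup.one_closed by fastforce
    moreover have "card {\<one>, y} = 2" using \<open>y \<noteq> \<one>\<close> by simp
    then have "coprime (card {\<one>, y}) (card H)" using coprime by (simp only:)
    ultimately show "y \<in> derangements"
      using derangement_if_coprime[OF involution_subgroup[OF yc y(2)]] by simp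
  qed
  moreover have "card (t ` (rcosets H - {H})) = card derangements"
    using card_image[OF inj] card_derangements finite_rcosets H_in_rcosets by simp
  moreover have "finite derangements" using finite_carrier by (simp add: derangements_def)
  ultimately have "t ` (rcosets H - {H}) = derangements" by (simp add: card_subset_eq)
  with assms(2) obtain Q where "Q \<in> rcosets H - {H}" "x = t Q" by blast
  then show ?thesis using t by simp
qed

theorem not_6_dvd_card_rcosets: "\<not> 6 dvd card (rcosets H)"
proof
  assume six: "6 dvd card (rcosets H)"
  then have three: "3 dvd card (rcosets H)" and even: "even (card (rcosets H))" by presburger+
  then have "order G = 3 ^ 1 * (order G div 3)" by (simp add: order_def card_carrier)
  then obtain K where K: "subgroup K G" "card K = 3"
    using sylow_thm[of 3 G 1] is_group finite_carrier by auto
  have "K \<noteq> {\<one>}" using K(2) by auto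
  then obtain x where x: "x \<in> K" "x \<noteq> \<one>" using subgroup.one_closed[OF K(1)] by blast
  then have xc: "x \<in> carrier G" using K(1) subgroup.subset by blast
  have "\<not> 3 dvd card H" using three two_le_card_rcosets card_H by presburger
  then have "coprime (card K) (card H)" using K(2) by (simp add: prime_imp_coprime)
  then have "x \<in> derangements" using derangement_if_coprime K(1) x by blast
  then have "x \<otimes> x = \<one>" using derangement_involution even by blast
  then have "subgroup {\<one>, x} G" using involution_subgroup xc by blast
  moreover have "card {\<one>, x} = 2" using x(2) by simp
  then have "coprime (card {\<one>, x}) (card K)" using K(2) by simp
  ultimately have "{\<one>, x} \<inter> K = {\<one>}" using subgroups_coprime_card_Int[OF finite_carrier _ K(1)] by blast
  then show False using x by blast
qed

end

section \<open>Isomorphisms between \<open>\<Phi>(G, S)\<close> and \<open>IK\<^sub>n\<close>\<close>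

lemma multigraph_iso_sym:
  assumes "multigraph_iso V1 E1 V2 E2"
  shows "multigraph_iso V2 E2 V1 E1"
proof -
  obtain f where f: "bij_betw f V1 V2" "\<forall>u\<in>V1. \<forall>v\<in>V1. E1 u v \<approx> E2 (f u) (f v)"
    using assms unfolding multigraph_iso_def by blast
  let ?g = "inv_into V1 f"
  have g: "bij_betw ?g V2 V1" using bij_betw_inv_into[OF f(1)] .
  have "E2 u v \<approx> E1 (?g u) (?g v)" if "u \<in> V2" "v \<in> V2" for u v
  proof -
    have "?g u \<in> V1" "?g v \<in> V1" using that bij_betwE[OF g] by blast+
    then have "E1 (?g u) (?g v) \<approx> E2 (f (?g u)) (f (?g v))" using f(2) by blast
    then show ?thesis using that bij_betw_inv_into_right[OF f(1)] by (simp add: eqpoll_sym)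
  qed
  with g show ?thesis unfolding multigraph_iso_def by blast
qed

lemma phi_vertices_iff [simp]:
  "(k, C) \<in> phi_vertices G S \<longleftrightarrow> k < length S \<and> C \<in> rcosets\<^bsub>G\<^esub> (generate G {S ! k})"
  by (simp add: phi_vertices_def)

lemma phi_edges_Pair [simp]: "phi_edges (i, C) (j, D) = (if i \<noteq> j then C \<inter> D else {})"
  by (simp add: phi_edges_def)

lemma IK_adj_simps [simp]:
  "IK_adj (Inl v) (Inr e) \<longleftrightarrow> v \<in> e" "IK_adj (Inr e) (Inl v) \<longleftrightarrow> v \<in> e"
  "\<not> IK_adj (Inl v) (Inl w)" "\<not> IK_adj (Inr e) (Inr e')"
  by (auto simp: IK_adj_def)

lemma IK_adj_triangle_free: "\<not> (IK_adj x y \<and> IK_adj y z \<and> IK_adj x z)"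
  by (cases x; cases y; cases z) auto

lemma Inl_in_IK_vertices_iff [simp]: "Inl v \<in> IK_vertices n \<longleftrightarrow> v < n"
  by (auto simp: IK_vertices_def)

lemma Inr_in_IK_vertices_iff [simp]: "Inr e \<in> IK_vertices n \<longleftrightarrow> e \<subseteq> {..<n} \<and> card e = 2"
  by (auto simp: IK_vertices_def)

definition IK_degree :: "nat \<Rightarrow> nat + nat set \<Rightarrow> nat" where
  "IK_degree n u = card {w \<in> IK_vertices n. IK_adj u w}"

lemma IK_degree_Inr:
  assumes "Inr e \<in> IK_vertices n"
  shows "IK_degree n (Inr e) = 2"
proof -
  have "{w \<in> IK_vertices n. IK_adj (Inr e) w} = Inl ` e"
  proof (rule Set.set_eqI)
    fix w show "w \<in> {w \<in> IK_vertices n. IK_adj (Inr e) w} \<longleftrightarrow> w \<in> Inl ` e"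
      using assms by (cases w) auto
  qed
  then show ?thesis using assms by (simp add: IK_degree_def card_image)
qed

lemma IK_degree_Inl:
  assumes "v < n"
  shows "IK_degree n (Inl v) = n - 1"
proof -
  have "{w \<in> IK_vertices n. IK_adj (Inl v) w} = (\<lambda>u. Inr {v, u}) ` ({..<n} - {v})"
  proof (rule Set.set_eqI, rule iffI)
    fix w assume w: "w \<in> {w \<in> IK_vertices n. IK_adj (Inl v) w}"
    then obtain e where e: "w = Inr e" "e \<subseteq> {..<n}" "card e = 2" "v \<in> e"
      by (auto simp: IK_adj_def split: sum.splits)
    then have "card (e - {v}) = 1" by (simp add: card_Diff_singleton)
    then obtain u where "e - {v} = {u}" by (rule card_1_singletonE)
    then have "e = {v, u}" "u \<noteq> v" using e(4) by auto
    then show "w \<in> (\<lambda>u. Inr {v, u}) ` ({..<n} - {v})" using e by auto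
  qed (use assms in auto)
  moreover have "inj_on (\<lambda>u. Inr {v, u} :: nat + nat set) ({..<n} - {v})"
    by (auto simp: inj_on_def doubleton_eq_iff)
  ultimately show ?thesis using assms by (simp add: IK_degree_def card_image)
qed

locale phi_IK_iso = group G for G (structure) +
  fixes S :: "'a list" and n :: nat and g :: "nat \<times> 'a set \<Rightarrow> nat + nat set"
  assumes generators: "set S \<subseteq> carrier G"
    and iso_bij: "bij_betw g (phi_vertices G S) (IK_vertices n)"
    and iso_edges: "\<forall>p\<in>phi_vertices G S. \<forall>q\<in>phi_vertices G S. phi_edges p q \<approx> IK_edges (g p) (g q)"
    and four_le_n: "4 \<le> n"
begin

abbreviation V where "V \<equiv> phi_vertices G S"

abbreviation cyc where "cyc k \<equiv> generate G {S ! k}"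

lemma g_in_IK_vertices: "p \<in> V \<Longrightarrow> g p \<in> IK_vertices n"
  using bij_betwE[OF iso_bij] by blast

lemma g_eq_iff: "p \<in> V \<Longrightarrow> q \<in> V \<Longrightarrow> g p = g q \<longleftrightarrow> p = q"
  using inj_on_eq_iff[OF bij_betw_imp_inj_on[OF iso_bij]] .

lemma g_surj:
  assumes "w \<in> IK_vertices n"
  obtains p where "p \<in> V" "g p = w"
proof -
  have "w \<in> g ` V" using assms bij_betw_imp_surj_on[OF iso_bij] by simp
  then show ?thesis using that by blast
qed

lemma phi_edges_iso:
  assumes "p \<in> V" "q \<in> V"
  shows "if IK_adj (g p) (g q) then \<exists>x. phi_edges p q = {x} else phi_edges p q = {}"
proof -
  have "phi_edges p q \<approx> IK_edges (g p) (g q)" using iso_edges assms by blast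
  then show ?thesis
    by (cases "IK_adj (g p) (g q)") (simp_all add: IK_edges_def eqpoll_singleton_iff)
qed

lemma edge_iff_adj: "p \<in> V \<Longrightarrow> q \<in> V \<Longrightarrow> phi_edges p q \<noteq> {} \<longleftrightarrow> IK_adj (g p) (g q)"
  using phi_edges_iso[of p q] by (auto split: if_splits)

lemma edge_unique:
  "p \<in> V \<Longrightarrow> q \<in> V \<Longrightarrow> x \<in> phi_edges p q \<Longrightarrow> y \<in> phi_edges p q \<Longrightarrow> x = y"
  using phi_edges_iso[of p q] by (auto split: if_splits)

lemma cyc_subgroup: "k < length S \<Longrightarrow> subgroup (cyc k) G"
  using generators nth_mem by (intro generate_is_subgroup) auto

lemma adj_if_common_element:
  assumes "k < length S" "l < length S" "k \<noteq> l" "C \<in> rcosets (cyc k)" "D \<in> rcosets (cyc l)"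
    and "x \<in> C" "x \<in> D"
  shows "IK_adj (g (k, C)) (g (l, D))"
  using assms edge_iff_adj[of "(k, C)" "(l, D)"] by auto

lemma cyc_vertices_adj:
  assumes "k < length S" "l < length S" "k \<noteq> l"
  shows "IK_adj (g (k, cyc k)) (g (l, cyc l))"
  using assms cyc_subgroup subgroup.subgroup_in_rcosets[OF _ is_group] subgroup.one_closed
  by (intro adj_if_common_element[of k l _ _ \<one>]) auto

lemma length_generators: "length S = 2"
proof (rule ccontr)
  assume "length S \<noteq> 2"
  then consider "length S \<le> 1" | "2 < length S" by linarith
  then show False
  proof cases
    case 1
    have "Inl 0 \<in> IK_vertices n" "Inr {0, 1} \<in> IK_vertices n" using four_le_n by auto
    then obtain p q where p: "p \<in> V" "g p = Inl 0" and q: "q \<in> V" "g q = Inr {0, 1}"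
      using g_surj by metis
    have "fst p = 0" "fst q = 0" using p(1) q(1) 1 by (auto simp: phi_vertices_def)
    then have "phi_edges p q = {}" by (simp add: phi_edges_def)
    then show False using edge_iff_adj[OF p(1) q(1)] p(2) q(2) by simp
  next
    case 2
    then have "0 < length S" "1 < length S" by auto
    with 2 have "IK_adj (g (0, cyc 0)) (g (1, cyc 1))" "IK_adj (g (1, cyc 1)) (g (2, cyc 2))"
      "IK_adj (g (0, cyc 0)) (g (2, cyc 2))"
      using cyc_vertices_adj[of 0 1] cyc_vertices_adj[of 1 2] cyc_vertices_adj[of 0 2] by auto
    then show False using IK_adj_triangle_free[of "g (0, cyc 0)" "g (1, cyc 1)" "g (2, cyc 2)"] by simp
  qed
qed

lemma IK_degree_g:
  assumes "p \<in> V"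
  shows "IK_degree n (g p) = card {q \<in> V. phi_edges p q \<noteq> {}}"
proof -
  have image: "g ` {q \<in> V. phi_edges p q \<noteq> {}} = {w \<in> IK_vertices n. IK_adj (g p) w}"
  proof (rule Set.set_eqI, rule iffI)
    fix w assume w: "w \<in> {w \<in> IK_vertices n. IK_adj (g p) w}"
    then obtain q where q: "q \<in> V" "g q = w" using g_surj by blast
    then have "phi_edges p q \<noteq> {}" using edge_iff_adj[OF assms q(1)] w by simp
    then show "w \<in> g ` {q \<in> V. phi_edges p q \<noteq> {}}" using q by blast
  next
    fix w assume "w \<in> g ` {q \<in> V. phi_edges p q \<noteq> {}}"
    then obtain q where "q \<in> V" "phi_edges p q \<noteq> {}" "w = g q" by blast
    then show "w \<in> {w \<in> IK_vertices n. IK_adj (g p) w}"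
      using edge_iff_adj[OF assms] g_in_IK_vertices by simp
  qed
  have "inj_on g {q \<in> V. phi_edges p q \<noteq> {}}"
    using bij_betw_imp_inj_on[OF iso_bij] by (rule inj_on_subset) auto
  then have "card (g ` {q \<in> V. phi_edges p q \<noteq> {}}) = card {q \<in> V. phi_edges p q \<noteq> {}}"
    by (rule card_image)
  then show ?thesis using image by (simp add: IK_degree_def)
qed

text \<open>With two generators, the neighbours of \<open>(k, C)\<close> are the cosets \<open>(l, \<langle>S!l\<rangle> x)\<close>,
  \<open>x \<in> C\<close>, \<open>l \<noteq> k\<close>, and they are distinct because edges are simple.\<close>

lemma card_phi_neighbours:
  assumes "(k, C) \<in> V"
  shows "card {q \<in> V. phi_edges (k, C) q \<noteq> {}} = card (cyc k)"
proof -
  define l where "l = 1 - k"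
  have k: "k < 2" "C \<in> rcosets (cyc k)" using assms length_generators by auto
  have l: "l < 2" "l \<noteq> k" unfolding l_def using k(1) by arith+
  have cyc_k: "subgroup (cyc k) G" using cyc_subgroup k length_generators by simp
  have C_carrier: "C \<subseteq> carrier G" using subgroup.rcosets_carrier[OF cyc_k is_group k(2)] .
  have cyc_l: "subgroup (cyc l) G" using cyc_subgroup l length_generators by simp
  have l_vertex: "(l, cyc l #> x) \<in> V" if "x \<in> C" for x
    using that C_carrier l length_generators rcosetsI[OF subgroup.subset[OF cyc_l]] by auto
  have mem_l: "x \<in> cyc l #> x" if "x \<in> C" for x
    using that C_carrier rcos_self[OF _ cyc_l] by blast
  have "{q \<in> V. phi_edges (k, C) q \<noteq> {}} = (\<lambda>x. (l, cyc l #> x)) ` C"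
  proof (rule Set.set_eqI, rule iffI)
    fix q assume q: "q \<in> {q \<in> V. phi_edges (k, C) q \<noteq> {}}"
    then obtain l' D where lD: "q = (l', D)" "l' < 2" "D \<in> rcosets (cyc l')" "l' \<noteq> k"
      using length_generators by (cases q) (auto split: if_splits)
    then have "l' = l" using k(1) by (auto simp: l_def)
    moreover obtain x where "x \<in> C" "x \<in> D" using q lD by (auto split: if_splits)
    ultimately show "q \<in> (\<lambda>x. (l, cyc l #> x)) ` C"
      using lD cyc_l rcosets_eq_rcos_of_mem by blast
  next
    fix q assume "q \<in> (\<lambda>x. (l, cyc l #> x)) ` C"
    then obtain x where x: "x \<in> C" "q = (l, cyc l #> x)" by blast
    then have "x \<in> phi_edges (k, C) q" using mem_l l(2) by simp
    then show "q \<in> {q \<in> V. phi_edges (k, C) q \<noteq> {}}" using x l_vertex by blast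
  qed
  moreover have "inj_on (\<lambda>x. (l, cyc l #> x)) C"
  proof (rule inj_onI)
    fix x y assume xy: "x \<in> C" "y \<in> C" "(l, cyc l #> x) = (l, cyc l #> y)"
    then have "x \<in> phi_edges (k, C) (l, cyc l #> x)" "y \<in> phi_edges (k, C) (l, cyc l #> x)"
      using mem_l l(2) by auto
    then show "x = y" using edge_unique assms l_vertex xy(1) by blast
  qed
  ultimately have "card {q \<in> V. phi_edges (k, C) q \<noteq> {}} = card C" by (simp add: card_image)
  also have "\<dots> = card (cyc k)" using card_rcosets_equal[OF k(2) subgroup.subset[OF cyc_k]] by simp
  finally show ?thesis .
qed

lemma IK_degree_cyc: "(k, C) \<in> V \<Longrightarrow> IK_degree n (g (k, C)) = card (cyc k)"
  using IK_degree_g card_phi_neighbours by simp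

lemma card_cyc_if_Inl: "k < length S \<Longrightarrow> g (k, cyc k) = Inl a \<Longrightarrow> card (cyc k) = n - 1"
  using IK_degree_cyc[of k "cyc k"] g_in_IK_vertices[of "(k, cyc k)"] IK_degree_Inl[of a n]
    cyc_subgroup subgroup.subgroup_in_rcosets[OF _ is_group] by auto

lemma card_cyc_if_Inr: "k < length S \<Longrightarrow> g (k, cyc k) = Inr e \<Longrightarrow> card (cyc k) = 2"
  using IK_degree_cyc[of k "cyc k"] g_in_IK_vertices[of "(k, cyc k)"] IK_degree_Inr[of e n]
    cyc_subgroup subgroup.subgroup_in_rcosets[OF _ is_group] by auto

end

text \<open>The generator \<open>S ! i\<close> is the one whose cosets correspond to the vertices of \<open>K\<^sub>n\<close>,
  and \<open>S ! j\<close> the one whose cosets correspond to its edges.\<close>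

locale phi_IK_iso_oriented = phi_IK_iso G S n g for G (structure) and S n g +
  fixes i j
  assumes i_less_2: "i < 2" and j_less_2: "j < 2" and i_ne_j: "i \<noteq> j"
    and card_cyc_i: "card (generate G {S ! i}) = n - 1"
    and card_cyc_j: "card (generate G {S ! j}) = 2"
begin

lemma cyc_i_subgroup: "subgroup (cyc i) G"
  using cyc_subgroup i_less_2 length_generators by simp

lemma cyc_j_subgroup: "subgroup (cyc j) G"
  using cyc_subgroup j_less_2 length_generators by simp

lemma class_i_Inl:
  assumes "C \<in> rcosets (cyc i)"
  obtains a where "a < n" "g (i, C) = Inl a"
proof -
  have v: "(i, C) \<in> V" using assms i_less_2 length_generators by simp
  have deg: "IK_degree n (g (i, C)) = n - 1" using IK_degree_cyc[OF v] card_cyc_i by simp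
  show ?thesis
  proof (cases "g (i, C)")
    case (Inl a)
    then show ?thesis using that g_in_IK_vertices[OF v] by simp
  next
    case (Inr e)
    then have "IK_degree n (g (i, C)) = 2" using IK_degree_Inr g_in_IK_vertices[OF v] by simp
    then show ?thesis using deg four_le_n by simp
  qed
qed

lemma class_j_Inr:
  assumes "D \<in> rcosets (cyc j)"
  obtains e where "g (j, D) = Inr e" "card e = 2"
proof -
  have v: "(j, D) \<in> V" using assms j_less_2 length_generators by simp
  have deg: "IK_degree n (g (j, D)) = 2" using IK_degree_cyc[OF v] card_cyc_j by simp
  show ?thesis
  proof (cases "g (j, D)")
    case (Inl a)
    then have "IK_degree n (g (j, D)) = n - 1" using IK_degree_Inl g_in_IK_vertices[OF v] by simp
    then show ?thesis using deg four_le_n by simp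
  next
    case (Inr e)
    then show ?thesis using that g_in_IK_vertices[OF v] by simp
  qed
qed

lemma class_i_eq_iff:
  "C \<in> rcosets (cyc i) \<Longrightarrow> C' \<in> rcosets (cyc i) \<Longrightarrow> g (i, C) = g (i, C') \<longleftrightarrow> C = C'"
  using g_eq_iff[of "(i, C)" "(i, C')"] i_less_2 length_generators by simp

lemma card_rcosets_cyc_i: "card (rcosets (cyc i)) = n"
proof -
  have "bij_betw (\<lambda>C. g (i, C)) (rcosets (cyc i)) (Inl ` {..<n})"
  proof (rule bij_betw_imageI)
    show "inj_on (\<lambda>C. g (i, C)) (rcosets (cyc i))"
      using class_i_eq_iff by (auto simp: inj_on_def)
    show "(\<lambda>C. g (i, C)) ` (rcosets (cyc i)) = Inl ` {..<n}"
    proof (rule Set.set_eqI, rule iffI)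
      fix w assume "w \<in> (\<lambda>C. g (i, C)) ` (rcosets (cyc i))"
      then obtain C where C: "C \<in> rcosets (cyc i)" "w = g (i, C)" by blast
      obtain a where "a < n" "g (i, C) = Inl a" using class_i_Inl[OF C(1)] .
      then show "w \<in> Inl ` {..<n}" using C(2) by simp
    next
      fix w :: "nat + nat set" assume "w \<in> Inl ` {..<n}"
      then obtain a where a: "a < n" "w = Inl a" by blast
      then have "w \<in> IK_vertices n" by simp
      then obtain p where p: "p \<in> V" "g p = w" by (rule g_surj)
      obtain k C where kC: "p = (k, C)" by (cases p)
      have "k \<noteq> j"
      proof
        assume "k = j"
        then have "C \<in> rcosets (cyc j)" using p(1) kC by simp
        then obtain e where "g (j, C) = Inr e" by (rule class_j_Inr)
        then show False using p(2) a(2) kC \<open>k = j\<close> by simp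
      qed
      moreover have "k < 2" using p(1) kC length_generators by simp
      ultimately have "k = i" using i_less_2 j_less_2 i_ne_j by arith
      then show "w \<in> (\<lambda>C. g (i, C)) ` (rcosets (cyc i))" using p kC by auto
    qed
  qed
  then have "card (rcosets (cyc i)) = card (Inl ` {..<n} :: (nat + nat set) set)"
    by (rule bij_betw_same_card)
  then show ?thesis by (simp add: card_image)
qed

lemma finite_carrier: "finite (carrier G)"
proof -
  have "card (rcosets (cyc i)) > 0" using card_rcosets_cyc_i four_le_n by simp
  then have "finite (rcosets (cyc i))" by (rule card_ge_0_finite)
  moreover have "finite C" if "C \<in> rcosets (cyc i)" for C
  proof (rule card_ge_0_finite)
    show "card C > 0"
      using card_rcosets_equal[OF that subgroup.subset[OF cyc_i_subgroup]] card_cyc_i four_le_n by simp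
  qed
  ultimately have "finite (\<Union>(rcosets (cyc i)))" by (rule finite_Union)
  then show ?thesis using rcosets_part_G[OF cyc_i_subgroup] by simp
qed

end

locale phi_IK_iso_involution = phi_IK_iso_oriented G S n g i j for G (structure) and S n g i j +
  fixes b
  assumes cyc_j_eq: "generate G {S ! j} = {\<one>, b}"
    and b_ne_one: "b \<noteq> \<one>" and b_involution: "b \<otimes> b = \<one>"
begin

lemma b_carrier: "b \<in> carrier G"
  using cyc_j_eq subgroup.subset[OF cyc_j_subgroup] by blast

lemma rcos_cyc_j: "z \<in> carrier G \<Longrightarrow> cyc j #> z = {z, b \<otimes> z}"
  by (auto simp: r_coset_def cyc_j_eq)

lemma b_notin_cyc_i: "b \<notin> cyc i"
proof
  assume "b \<in> cyc i"
  moreover have "\<one> \<in> cyc i" using subgroup.one_closed[OF cyc_i_subgroup] .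
  ultimately have "\<one> \<in> phi_edges (i, cyc i) (j, cyc j)" "b \<in> phi_edges (i, cyc i) (j, cyc j)"
    using cyc_j_eq i_ne_j by auto
  moreover have "(i, cyc i) \<in> V" "(j, cyc j) \<in> V"
    using i_less_2 j_less_2 length_generators cyc_i_subgroup cyc_j_subgroup
      subgroup.subgroup_in_rcosets[OF _ is_group] by auto
  ultimately have "\<one> = b" by (intro edge_unique)
  then show False using b_ne_one by simp
qed

lemma rcos_cyc_i_ne: "z \<in> carrier G \<Longrightarrow> cyc i #> (b \<otimes> z) \<noteq> cyc i #> z"
  using rcos_eq_iff[OF cyc_i_subgroup] b_notin_cyc_i b_carrier by (simp add: m_assoc)

lemma g_rcos_cyc_j:
  assumes z: "z \<in> carrier G"
    and a: "g (i, cyc i #> z) = Inl a" and a': "g (i, cyc i #> (b \<otimes> z)) = Inl a'"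
  shows "g (j, cyc j #> z) = Inr {a, a'}"
proof -
  have bz: "b \<otimes> z \<in> carrier G" using z b_carrier by simp
  have cosets: "cyc i #> z \<in> rcosets (cyc i)" "cyc i #> (b \<otimes> z) \<in> rcosets (cyc i)"
    "cyc j #> z \<in> rcosets (cyc j)"
    using rcosetsI[OF subgroup.subset[OF cyc_i_subgroup] z] rcosetsI[OF subgroup.subset[OF cyc_i_subgroup] bz]
      rcosetsI[OF subgroup.subset[OF cyc_j_subgroup] z] by auto
  have "a \<noteq> a'"
    using class_i_eq_iff[OF cosets(1,2)] a a' rcos_cyc_i_ne[OF z] by auto
  obtain e where e: "g (j, cyc j #> z) = Inr e" "card e = 2" using class_j_Inr[OF cosets(3)] .
  have "IK_adj (g (i, cyc i #> z)) (g (j, cyc j #> z))"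
    using adj_if_common_element[OF _ _ i_ne_j cosets(1,3), of z] rcos_self[OF z cyc_i_subgroup]
      rcos_cyc_j[OF z] i_less_2 j_less_2 length_generators by simp
  moreover have "IK_adj (g (i, cyc i #> (b \<otimes> z))) (g (j, cyc j #> z))"
    using adj_if_common_element[OF _ _ i_ne_j cosets(2,3), of "b \<otimes> z"] rcos_self[OF bz cyc_i_subgroup]
      rcos_cyc_j[OF z] i_less_2 j_less_2 length_generators by simp
  ultimately have "{a, a'} \<subseteq> e" using a a' e(1) by simp
  moreover have "finite e" by (rule card_ge_0_finite) (simp add: e(2))
  ultimately have "{a, a'} = e" using e(2) \<open>a \<noteq> a'\<close> by (simp add: card_subset_eq)
  then show ?thesis using e(1) by simp
qed

lemma class_i_Inl_rcos:
  assumes "z \<in> carrier G"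
  obtains a where "g (i, cyc i #> z) = Inl a"
  using class_i_Inl rcosetsI[OF subgroup.subset[OF cyc_i_subgroup] assms] by metis

lemma coset_pair_inj:
  assumes z: "z \<in> carrier G" and w: "w \<in> carrier G"
    and eq: "cyc i #> z = cyc i #> w" "cyc i #> (b \<otimes> z) = cyc i #> (b \<otimes> w)"
  shows "z = w"
proof -
  obtain a where a: "g (i, cyc i #> z) = Inl a" using class_i_Inl_rcos[OF z] .
  obtain a' where a': "g (i, cyc i #> (b \<otimes> z)) = Inl a'"
    using class_i_Inl_rcos b_carrier z by (meson m_closed)
  have "g (j, cyc j #> z) = g (j, cyc j #> w)"
    using g_rcos_cyc_j[OF z a a'] g_rcos_cyc_j[OF w] a a' eq by simp
  moreover have "(j, cyc j #> z) \<in> V" "(j, cyc j #> w) \<in> V"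
    using rcosetsI subgroup.subset[OF cyc_j_subgroup] z w j_less_2 length_generators by auto
  ultimately have "cyc j #> z = cyc j #> w" using g_eq_iff by blast
  then have "w \<in> {z, b \<otimes> z}" using rcos_cyc_j z w by auto
  moreover have "w \<noteq> b \<otimes> z" using rcos_cyc_i_ne[OF z] eq(1) by auto
  ultimately show ?thesis by blast
qed

lemma coset_pair_surj:
  assumes P: "P \<in> rcosets (cyc i)" and Q: "Q \<in> rcosets (cyc i)" and "P \<noteq> Q"
  obtains z where "z \<in> carrier G" "cyc i #> z = P" "cyc i #> (b \<otimes> z) = Q"
proof -
  obtain x where x: "x < n" "g (i, P) = Inl x" using class_i_Inl[OF P] .
  obtain y where y: "y < n" "g (i, Q) = Inl y" using class_i_Inl[OF Q] .
  have "x \<noteq> y" using class_i_eq_iff[OF P Q] x y \<open>P \<noteq> Q\<close> by auto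
  then have "Inr {x, y} \<in> IK_vertices n" using x y by simp
  then obtain p where p: "p \<in> V" "g p = Inr {x, y}" by (rule g_surj)
  obtain k D where kD: "p = (k, D)" by (cases p)
  have "k \<noteq> i"
  proof
    assume "k = i"
    then obtain a where "g (k, D) = Inl a" using class_i_Inl p(1) kD by auto
    then show False using p(2) kD by simp
  qed
  moreover have "k < 2" using p(1) kD length_generators by simp
  ultimately have "k = j" using i_less_2 j_less_2 i_ne_j by arith
  then have "D \<in> rcosets (cyc j)" using p(1) kD by simp
  then obtain z where z: "z \<in> carrier G" "D = cyc j #> z" by (auto simp: RCOSETS_def)
  have bz: "b \<otimes> z \<in> carrier G" using z(1) b_carrier by simp
  obtain a where a: "g (i, cyc i #> z) = Inl a" using class_i_Inl_rcos[OF z(1)] .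
  obtain a' where a': "g (i, cyc i #> (b \<otimes> z)) = Inl a'" using class_i_Inl_rcos[OF bz] .
  have Rz: "cyc i #> z \<in> rcosets (cyc i)" and Rbz: "cyc i #> (b \<otimes> z) \<in> rcosets (cyc i)"
    using rcosetsI[OF subgroup.subset[OF cyc_i_subgroup]] z(1) bz by auto
  have "{x, y} = {a, a'}" using g_rcos_cyc_j[OF z(1) a a'] p(2) kD z(2) \<open>k = j\<close> by simp
  then consider "x = a" "y = a'" | "x = a'" "y = a" by (auto simp: doubleton_eq_iff)
  then show ?thesis
  proof cases
    case 1
    then have "P = cyc i #> z" "Q = cyc i #> (b \<otimes> z)"
      using class_i_eq_iff[OF P Rz] class_i_eq_iff[OF Q Rbz] x(2) y(2) a a' by simp_all
    then show ?thesis using that z(1) by simp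
  next
    case 2
    have "b \<otimes> (b \<otimes> z) = b \<otimes> b \<otimes> z" using z(1) b_carrier by (simp add: m_assoc)
    then have bbz: "b \<otimes> (b \<otimes> z) = z" using z(1) b_involution by simp
    have "P = cyc i #> (b \<otimes> z)" "Q = cyc i #> z"
      using 2 class_i_eq_iff[OF P Rbz] class_i_eq_iff[OF Q Rz] x(2) y(2) a a' by simp_all
    then show ?thesis using that[of "b \<otimes> z"] bz bbz by simp
  qed
qed

lemma coset_pair_bij:
  "bij_betw (\<lambda>z. (cyc i #> z, cyc i #> (b \<otimes> z))) (carrier G)
     {(P, Q). P \<in> rcosets (cyc i) \<and> Q \<in> rcosets (cyc i) \<and> P \<noteq> Q}"
proof (rule bij_betw_imageI)
  show "inj_on (\<lambda>z. (cyc i #> z, cyc i #> (b \<otimes> z))) (carrier G)"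
    using coset_pair_inj by (auto simp: inj_on_def)
  show "(\<lambda>z. (cyc i #> z, cyc i #> (b \<otimes> z))) ` carrier G
      = {(P, Q). P \<in> rcosets (cyc i) \<and> Q \<in> rcosets (cyc i) \<and> P \<noteq> Q}"
  proof (rule Set.set_eqI, rule iffI)
    fix PQ assume "PQ \<in> (\<lambda>z. (cyc i #> z, cyc i #> (b \<otimes> z))) ` carrier G"
    then obtain z where z: "z \<in> carrier G" "PQ = (cyc i #> z, cyc i #> (b \<otimes> z))" by blast
    then show "PQ \<in> {(P, Q). P \<in> rcosets (cyc i) \<and> Q \<in> rcosets (cyc i) \<and> P \<noteq> Q}"
      using rcosetsI[OF subgroup.subset[OF cyc_i_subgroup]] b_carrier rcos_cyc_i_ne[OF z(1)] by auto
  next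
    fix PQ assume "PQ \<in> {(P, Q). P \<in> rcosets (cyc i) \<and> Q \<in> rcosets (cyc i) \<and> P \<noteq> Q}"
    then obtain P Q where PQ: "PQ = (P, Q)"
      and P: "P \<in> rcosets (cyc i)" and Q: "Q \<in> rcosets (cyc i)" and "P \<noteq> Q" by blast
    obtain z where "z \<in> carrier G" "cyc i #> z = P" "cyc i #> (b \<otimes> z) = Q"
      using coset_pair_surj[OF P Q \<open>P \<noteq> Q\<close>] .
    then show "PQ \<in> (\<lambda>z. (cyc i #> z, cyc i #> (b \<otimes> z))) ` carrier G" using PQ by blast
  qed
qed

lemma sharply_2_transitive: "sharply_2_transitive_cosets G (cyc i) b"
  using is_group cyc_i_subgroup finite_carrier b_carrier b_involution coset_pair_bij
  by (simp add: sharply_2_transitive_cosets_def sharply_2_transitive_cosets_axioms_def)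

end

theorem (in phi_IK_iso) not_6_dvd: "\<not> 6 dvd n"
proof -
  have adj: "IK_adj (g (0, cyc 0)) (g (1, cyc 1))"
    using cyc_vertices_adj[of 0 1] length_generators by simp
  obtain i j where ij: "i < 2" "j < 2" "i \<noteq> j" "card (cyc i) = n - 1" "card (cyc j) = 2"
  proof (cases "g (0, cyc 0)")
    case (Inl a)
    with adj obtain e where "g (1, cyc 1) = Inr e" by (cases "g (1, cyc 1)") auto
    then show ?thesis
      using that[of 0 1] card_cyc_if_Inl[of 0, OF _ Inl] card_cyc_if_Inr[of 1] length_generators by simp
  next
    case (Inr e)
    with adj obtain a where "g (1, cyc 1) = Inl a" by (cases "g (1, cyc 1)") auto
    then show ?thesis
      using that[of 1 0] card_cyc_if_Inl[of 1] card_cyc_if_Inr[of 0, OF _ Inr] length_generators by simp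
  qed
  interpret oriented: phi_IK_iso_oriented G S n g i j
    using phi_IK_iso_axioms ij by (simp add: phi_IK_iso_oriented_def phi_IK_iso_oriented_axioms_def)
  obtain b where b: "cyc j = {\<one>, b}" "b \<noteq> \<one>" "b \<in> carrier G" "b \<otimes> b = \<one>"
    using subgroup_card_2[OF oriented.cyc_j_subgroup ij(5)] by blast
  interpret involution: phi_IK_iso_involution G S n g i j b
    using oriented.phi_IK_iso_oriented_axioms b
    by (simp add: phi_IK_iso_involution_def phi_IK_iso_involution_axioms_def)
  interpret sharply_2_transitive_cosets G "cyc i" b by (rule involution.sharply_2_transitive)
  show ?thesis using not_6_dvd_card_rcosets oriented.card_rcosets_cyc_i by simp
qed

theorem corollary4:
  fixes n :: nat and G :: "('g, 'm) monoid_scheme"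
  assumes "6 dvd n" and "n > 0" and "group G"
  shows "\<not> is_G_graph (IK_vertices n) IK_edges G"
proof
  assume "is_G_graph (IK_vertices n) IK_edges G"
  then obtain S where S: "set S \<subseteq> carrier G"
    and "multigraph_iso (IK_vertices n) IK_edges (phi_vertices G S) phi_edges"
    unfolding is_G_graph_def by blast
  then obtain g where "bij_betw g (phi_vertices G S) (IK_vertices n)"
    and "\<forall>p\<in>phi_vertices G S. \<forall>q\<in>phi_vertices G S. phi_edges p q \<approx> IK_edges (g p) (g q)"
    using multigraph_iso_sym unfolding multigraph_iso_def by blast
  moreover have "4 \<le> n" using assms(1,2) dvd_imp_le by fastforce
  ultimately interpret phi_IK_iso G S n g
    using assms(3) S by (simp add: phi_IK_iso_def phi_IK_iso_axioms_def)
  show False using not_6_dvd assms(1) by simp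
qed

end
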